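(* Let $d=2$, write $z=(z_1,z_2)$, and for $r\ge2$ let $D_r=\{z\in\mathbb{R}^2:z_1\ge0,\ 2\le|z|\le r\}$. There exists a constant $c>0$ such that for all Borel $U:\mathbb{R}^2\to[0,\infty]$ and all $r\ge2$, $$\int_{D_r}K(1,z,(r,0))\,U(z)\,dz\le c\sup_{w\in\mathbb{R}^2}\int_{|z|\le2}U(z+w)\,dz,$$ where $K(1,z,(r,0))=e^{-\frac12 r(|z|-z_1)}\log\big(1+(r|z|)^{-1/2}\big)\mathbf 1_{|z|\le r}$. *)

theory Defs
  imports "HOL-Analysis.Analysis"
begin

definition D_region :: "real \<Rightarrow> (real^2) set" where
  "D_region r = {z. z$1 \<ge> 0 \<and> 2 \<le> norm z \<and> norm z \<le> r}"

definition K1 :: "real \<Rightarrow> real^2 \<Rightarrow> real" where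
  "K1 r z = exp (- (1/2) * r * (norm z - z$1)) * ln (1 + (r * norm z) powr (-1/2))
            * indicator {y. norm y \<le> r} z"

end

theory Submission
  imports Defs
begin

text \<open>Cover the region by the unit cells \<open>cell m k\<close> with \<open>m \<le> r\<close>. Since
  \<open>r (|z| - z\<^sub>1) = r z\<^sub>2\<^sup>2 / (|z| + z\<^sub>1) \<ge> z\<^sub>2\<^sup>2 / 2\<close> and \<open>ln (1 + t) \<le> t\<close>, the kernel is at most
  \<open>exp (-k/4) / sqrt (r max m 1)\<close> on \<open>cell m k\<close>, and each cell lies in two discs of radius 2.
  Summing the geometric series over \<open>k\<close> and using \<open>\<Sum>m\<le>r. 1 / sqrt (r max m 1) \<le> 1/sqrt r + 2\<close>
  bounds the integral by a fixed multiple of the supremum of the disc integrals.\<close>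

definition local_mass :: "('a::euclidean_space \<Rightarrow> ennreal) \<Rightarrow> ennreal" where
  "local_mass U = (SUP w. \<integral>\<^sup>+ z\<in>cball 0 2. U (z + w) \<partial>lborel)"

definition cell :: "nat \<Rightarrow> nat \<Rightarrow> (real^2) set" where
  "cell m k = {z. real m \<le> z$1 \<and> z$1 < real m + 1 \<and> real k \<le> \<bar>z$2\<bar> \<and> \<bar>z$2\<bar> < real k + 1}"

lemma nn_integral_cball_translate:
  fixes U :: "'a::euclidean_space \<Rightarrow> ennreal"
  assumes U: "U \<in> borel_measurable borel"
  shows "(\<integral>\<^sup>+ z. U z * indicator (cball c e) z \<partial>lborel) = (\<integral>\<^sup>+ z\<in>cball 0 e. U (z + c) \<partial>lborel)"
proof -
  have [measurable]: "cball c e \<in> sets borel" by simp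
  have "(\<integral>\<^sup>+ z. U z * indicator (cball c e) z \<partial>lborel)
      = (\<integral>\<^sup>+ z. U z * indicator (cball c e) z \<partial>distr lborel borel ((+) c))"
    by (simp add: lborel_distr_plus)
  also have "\<dots> = (\<integral>\<^sup>+ z. U (c + z) * indicator (cball c e) (c + z) \<partial>lborel)"
    by (rule nn_integral_distr) (use U in measurable)
  also have "\<dots> = (\<integral>\<^sup>+ z\<in>cball 0 e. U (z + c) \<partial>lborel)"
    by (intro nn_integral_cong) (auto simp: indicator_def dist_norm add.commute)
  finally show ?thesis .
qed

lemma nn_integral_cball_le_local_mass:
  fixes U :: "'a::euclidean_space \<Rightarrow> ennreal"
  assumes "U \<in> borel_measurable borel"
  shows "(\<integral>\<^sup>+ z. U z * indicator (cball c 2) z \<partial>lborel) \<le> local_mass U"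
  unfolding local_mass_def nn_integral_cball_translate[OF assms]
  by (rule SUP_upper) simp

lemma nn_integral_union_le:
  fixes U :: "'a \<Rightarrow> ennreal"
  assumes "U \<in> borel_measurable M" "A \<in> sets M" "B \<in> sets M"
  shows "(\<integral>\<^sup>+ z. U z * indicator (A \<union> B) z \<partial>M)
    \<le> (\<integral>\<^sup>+ z. U z * indicator A z \<partial>M) + (\<integral>\<^sup>+ z. U z * indicator B z \<partial>M)"
proof -
  have "(\<integral>\<^sup>+ z. U z * indicator (A \<union> B) z \<partial>M)
      \<le> (\<integral>\<^sup>+ z. U z * indicator A z + U z * indicator B z \<partial>M)"
    by (intro nn_integral_mono) (auto simp: indicator_def)
  also have "\<dots> = (\<integral>\<^sup>+ z. U z * indicator A z \<partial>M) + (\<integral>\<^sup>+ z. U z * indicator B z \<partial>M)"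
    using assms by (intro nn_integral_add) auto
  finally show ?thesis .
qed

lemma cell_subset_two_cballs:
  "cell m k \<subseteq> cball (vector [real m + 1/2, real k + 1/2]) 2
             \<union> cball (vector [real m + 1/2, - real k - 1/2]) 2"
proof
  fix z assume z: "z \<in> cell m k"
  have "dist c z \<le> 2" if "\<bar>c$1 - z$1\<bar> \<le> 1" "\<bar>c$2 - z$2\<bar> \<le> 1" for c :: "real^2"
    using norm_le_l1_cart[of "c - z"] that by (simp add: dist_norm sum_2)
  then show "z \<in> cball (vector [real m + 1/2, real k + 1/2]) 2
             \<union> cball (vector [real m + 1/2, - real k - 1/2]) 2"
    using z by (cases "z$2 \<ge> 0") (auto simp: cell_def)
qed

lemma nn_integral_cell_le:
  assumes U: "U \<in> borel_measurable borel"
  shows "(\<integral>\<^sup>+ z. U z * indicator (cell m k) z \<partial>lborel) \<le> 2 * local_mass U"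
proof -
  let ?c1 = "vector [real m + 1/2, real k + 1/2] :: real^2"
  let ?c2 = "vector [real m + 1/2, - real k - 1/2] :: real^2"
  have "(\<integral>\<^sup>+ z. U z * indicator (cell m k) z \<partial>lborel)
      \<le> (\<integral>\<^sup>+ z. U z * indicator (cball ?c1 2 \<union> cball ?c2 2) z \<partial>lborel)"
    using cell_subset_two_cballs[of m k]
    by (intro nn_integral_mono mult_left_mono) (auto simp: indicator_def)
  also have "\<dots> \<le> local_mass U + local_mass U"
    using U by (intro order.trans[OF nn_integral_union_le] add_mono
                      nn_integral_cball_le_local_mass) auto
  finally show ?thesis by (simp add: mult_2)
qed

lemma nn_integral_weighted_sum_le:
  fixes U :: "'a \<Rightarrow> ennreal" and a :: "'i \<Rightarrow> nat \<Rightarrow> ennreal"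
  assumes "finite I" "U \<in> borel_measurable M" "\<And>i k. A i k \<in> sets M"
    and bound: "\<And>i k. (\<integral>\<^sup>+ z. U z * indicator (A i k) z \<partial>M) \<le> B"
  shows "(\<integral>\<^sup>+ z. (\<Sum>i\<in>I. \<Sum>k. a i k * (U z * indicator (A i k) z)) \<partial>M)
    \<le> (\<Sum>i\<in>I. \<Sum>k. a i k) * B"
proof -
  have "(\<integral>\<^sup>+ z. (\<Sum>i\<in>I. \<Sum>k. a i k * (U z * indicator (A i k) z)) \<partial>M)
      = (\<Sum>i\<in>I. \<Sum>k. a i k * (\<integral>\<^sup>+ z. U z * indicator (A i k) z \<partial>M))"
    using assms by (simp add: nn_integral_sum nn_integral_suminf nn_integral_cmult)
  also have "\<dots> \<le> (\<Sum>i\<in>I. \<Sum>k. a i k * B)"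
    by (intro sum_mono suminf_le mult_left_mono bound summableI) auto
  finally show ?thesis by (simp add: sum_distrib_right)
qed

lemma snd_sq_le_norm_minus_fst:
  fixes z :: "real^2"
  assumes "0 \<le> z$1" "norm z \<le> r"
  shows "(z$2)\<^sup>2 \<le> 2 * r * (norm z - z$1)"
proof -
  have norm_sq: "(norm z)\<^sup>2 = (z$1)\<^sup>2 + (z$2)\<^sup>2"
    by (simp add: norm_eq_sqrt_inner inner_vec_def sum_2 power2_eq_square)
  have "z$1 \<le> norm z" using component_le_norm_cart[of z 1] by simp
  have "(z$2)\<^sup>2 = (norm z - z$1) * (norm z + z$1)"
    using norm_sq by (simp add: algebra_simps power2_eq_square)
  also have "\<dots> \<le> (norm z - z$1) * (2 * r)"
    using assms \<open>z$1 \<le> norm z\<close> by (intro mult_left_mono) auto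
  finally show ?thesis by (simp add: algebra_simps)
qed

lemma K1_le_on_cell:
  assumes r: "r \<ge> 2" and z: "z \<in> D_region r" "z \<in> cell m k"
  shows "K1 r z \<le> exp (-1/4) ^ k / sqrt (r * max (real m) 1)"
proof -
  have x0: "0 \<le> z$1" and n2: "2 \<le> norm z" and nr: "norm z \<le> r"
    using z(1) by (auto simp: D_region_def)
  have k_le: "real k \<le> (z$2)\<^sup>2"
  proof -
    have "real k \<le> \<bar>z$2\<bar>" using z(2) by (simp add: cell_def)
    have "real k \<le> real k ^ 2" by (cases k) (auto simp: power2_eq_square)
    also have "\<dots> \<le> \<bar>z$2\<bar>\<^sup>2" using \<open>real k \<le> \<bar>z$2\<bar>\<close> by (intro power_mono) auto
    finally show ?thesis by simp
  qed
  have exp_le: "exp (- (1/2) * r * (norm z - z$1)) \<le> exp (-1/4) ^ k"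
  proof -
    have "- (1/2) * r * (norm z - z$1) \<le> real k * (-1/4)"
      using snd_sq_le_norm_minus_fst[OF x0 nr] k_le by (simp add: algebra_simps)
    then show ?thesis by (metis exp_le_cancel_iff exp_of_nat_mult)
  qed
  have "max (real m) 1 \<le> norm z"
    using z(2) n2 component_le_norm_cart[of z 1] by (auto simp: cell_def)
  then have ln_le: "ln (1 + (r * norm z) powr (-1/2)) \<le> 1 / sqrt (r * max (real m) 1)"
  proof -
    have "ln (1 + (r * norm z) powr (-1/2)) \<le> (r * norm z) powr (-1/2)"
      by (rule ln_add_one_self_le_self) simp
    also have "\<dots> = 1 / sqrt (r * norm z)"
      using r n2 by (simp add: powr_minus_divide powr_half_sqrt)
    also have "\<dots> \<le> 1 / sqrt (r * max (real m) 1)"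
      using \<open>max (real m) 1 \<le> norm z\<close> r n2
      by (intro divide_left_mono real_sqrt_le_mono mult_left_mono) (auto intro!: mult_pos_pos)
    finally show ?thesis .
  qed
  have "K1 r z = exp (- (1/2) * r * (norm z - z$1)) * ln (1 + (r * norm z) powr (-1/2))"
    using nr by (simp add: K1_def)
  also have "\<dots> \<le> exp (-1/4) ^ k * (1 / sqrt (r * max (real m) 1))"
    using exp_le ln_le r n2 by (intro mult_mono) auto
  finally show ?thesis by simp
qed

lemma D_region_covered_by_cells:
  assumes "z \<in> D_region r"
  obtains m k where "m \<le> nat \<lfloor>r\<rfloor>" "z \<in> cell m k"
proof
  have "0 \<le> z$1" "z$1 \<le> r"
    using assms component_le_norm_cart[of z 1] by (auto simp: D_region_def)
  then show "nat \<lfloor>z$1\<rfloor> \<le> nat \<lfloor>r\<rfloor>" "z \<in> cell (nat \<lfloor>z$1\<rfloor>) (nat \<lfloor>\<bar>z$2\<bar>\<rfloor>)"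
    by (auto simp: cell_def intro: nat_mono floor_mono)
qed

lemma sum_inverse_sqrt_le: "(\<Sum>m=1..n. 1 / sqrt (real m)) \<le> 2 * sqrt (real n)"
proof (induction n)
  case 0
  then show ?case by simp
next
  case (Suc n)
  define s where "s = sqrt (real (Suc n))"
  define s' where "s' = sqrt (real n)"
  have s_pos: "0 < s" and s_sq: "s\<^sup>2 = real n + 1"
    by (simp_all add: s_def)
  have "(s' * s)\<^sup>2 \<le> (real n + 1/2)\<^sup>2"
    by (simp add: s_def s'_def power_mult_distrib algebra_simps power2_eq_square)
  then have "s' * s \<le> real n + 1/2"
    by (rule power2_le_imp_le) simp
  then have "1 \<le> (2 * s - 2 * s') * s"
    using s_sq by (simp add: algebra_simps power2_eq_square)
  then have step: "1 / s \<le> 2 * s - 2 * s'"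
    using s_pos by (subst divide_le_eq) (auto simp: algebra_simps)
  show ?case
    using Suc.IH step by (simp add: s_def s'_def)
qed

lemma sum_cell_weights_le:
  assumes r: "r \<ge> 1"
  shows "(\<Sum>m\<le>nat \<lfloor>r\<rfloor>. 1 / sqrt (r * max (real m) 1)) \<le> 3"
proof -
  define n where "n = nat \<lfloor>r\<rfloor>"
  have "real n \<le> r"
    using r by (simp add: n_def)
  have factor: "(\<Sum>m\<le>n. 1 / sqrt (r * max (real m) 1)) = (\<Sum>m\<le>n. 1 / sqrt (max (real m) 1)) / sqrt r"
    by (simp add: real_sqrt_mult sum_divide_distrib mult.commute)
  have "(\<Sum>m\<le>n. 1 / sqrt (max (real m) 1)) = 1 + (\<Sum>m=1..n. 1 / sqrt (real m))"
    by (simp add: atMost_atLeast0 sum.atLeast_Suc_atMost)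
  also have "\<dots> \<le> 1 + 2 * sqrt r"
    using sum_inverse_sqrt_le[of n] real_sqrt_le_mono[OF \<open>real n \<le> r\<close>] by linarith
  finally have "(\<Sum>m\<le>n. 1 / sqrt (r * max (real m) 1)) \<le> (1 + 2 * sqrt r) / sqrt r"
    unfolding factor using r by (simp add: divide_right_mono)
  also have "\<dots> = 1 / sqrt r + 2"
    using r by (simp add: field_simps)
  also have "\<dots> \<le> 3"
    using r by simp
  finally show ?thesis unfolding n_def .
qed

lemma suminf_ennreal_geometric_divide:
  fixes q b :: real
  assumes "0 \<le> q" "q < 1" "0 \<le> b"
  shows "(\<Sum>k. ennreal (q ^ k / b)) = ennreal (1 / ((1 - q) * b))"
proof -
  have "summable (\<lambda>k. q ^ k / b)"
    using assms by (intro summable_divide summable_geometric) simp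
  then have "(\<Sum>k. ennreal (q ^ k / b)) = ennreal (\<Sum>k. q ^ k / b)"
    using assms by (intro suminf_ennreal2) auto
  also have "(\<Sum>k. q ^ k / b) = 1 / ((1 - q) * b)"
    using assms by (simp add: suminf_divide summable_geometric suminf_geometric)
  finally show ?thesis .
qed

lemma cell_borel [measurable]: "cell m k \<in> sets borel"
  unfolding cell_def by measurable

lemma K1_le_sum_over_cells:
  assumes r: "r \<ge> 2"
  shows "ennreal (K1 r z) * U z * indicator (D_region r) z
    \<le> (\<Sum>m\<le>nat \<lfloor>r\<rfloor>. \<Sum>k. ennreal (exp (-1/4) ^ k / sqrt (r * max (real m) 1))
                          * (U z * indicator (cell m k) z))"
    (is "_ \<le> (\<Sum>m\<le>nat \<lfloor>r\<rfloor>. \<Sum>k. ?t m k)")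
proof (cases "z \<in> D_region r")
  case True
  then obtain m k where m: "m \<le> nat \<lfloor>r\<rfloor>" and z: "z \<in> cell m k"
    by (rule D_region_covered_by_cells)
  have "ennreal (K1 r z) * U z * indicator (D_region r) z \<le> ?t m k"
    using True z K1_le_on_cell[OF r True z] by (auto intro: mult_right_mono ennreal_leI)
  also have "\<dots> \<le> (\<Sum>k. ?t m k)"
    using sum_le_suminf[of "?t m" "{k}"] by simp
  also have "\<dots> \<le> (\<Sum>m\<le>nat \<lfloor>r\<rfloor>. \<Sum>k. ?t m k)"
    using m by (intro member_le_sum) auto
  finally show ?thesis .
qed simp

lemma nn_integral_K1_le:
  assumes U: "U \<in> borel_measurable borel" and r: "r \<ge> 2"
  shows "(\<integral>\<^sup>+ z\<in>D_region r. ennreal (K1 r z) * U z \<partial>lborel)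
    \<le> ennreal (6 / (1 - exp (-1/4))) * local_mass U"
proof -
  define q :: real where "q = exp (-1/4)"
  have q: "0 \<le> q" "q < 1" by (simp_all add: q_def)
  define w where "w m k = ennreal (q ^ k / sqrt (r * max (real m) 1))" for m k
  have weights: "(\<Sum>m\<le>nat \<lfloor>r\<rfloor>. \<Sum>k. w m k) \<le> ennreal (3 / (1 - q))"
  proof -
    have "(\<Sum>m\<le>nat \<lfloor>r\<rfloor>. \<Sum>k. w m k)
        = (\<Sum>m\<le>nat \<lfloor>r\<rfloor>. ennreal (1 / ((1 - q) * sqrt (r * max (real m) 1))))"
      unfolding w_def using q r by (intro sum.cong refl suminf_ennreal_geometric_divide) auto
    also have "\<dots> = ennreal ((\<Sum>m\<le>nat \<lfloor>r\<rfloor>. 1 / sqrt (r * max (real m) 1)) / (1 - q))"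
      using q r by (simp add: sum_ennreal sum_divide_distrib mult.commute)
    also have "\<dots> \<le> ennreal (3 / (1 - q))"
      using sum_cell_weights_le[of r] q r by (intro ennreal_leI divide_right_mono) auto
    finally show ?thesis .
  qed
  have "(\<integral>\<^sup>+ z\<in>D_region r. ennreal (K1 r z) * U z \<partial>lborel)
      \<le> (\<integral>\<^sup>+ z. (\<Sum>m\<le>nat \<lfloor>r\<rfloor>. \<Sum>k. w m k * (U z * indicator (cell m k) z)) \<partial>lborel)"
    unfolding w_def q_def by (intro nn_integral_mono K1_le_sum_over_cells r)
  also have "\<dots> \<le> (\<Sum>m\<le>nat \<lfloor>r\<rfloor>. \<Sum>k. w m k) * (2 * local_mass U)"
    using U by (intro nn_integral_weighted_sum_le nn_integral_cell_le) auto
  also have "\<dots> \<le> ennreal (3 / (1 - q)) * (2 * local_mass U)"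
    using weights by (rule mult_right_mono) simp
  also have "\<dots> = ennreal (6 / (1 - q)) * local_mass U"
  proof -
    have "ennreal (3 / (1 - q)) * 2 = ennreal (6 / (1 - q))"
      using ennreal_mult''[of 2 "3 / (1 - q)"] by simp
    then show ?thesis by (metis mult.assoc)
  qed
  finally show ?thesis
    unfolding q_def .
qed

theorem lemma4p4:
  shows "\<exists>c::real. c > 0 \<and>
    (\<forall>(U :: real^2 \<Rightarrow> ennreal) (r::real). U \<in> borel_measurable borel \<longrightarrow> r \<ge> 2 \<longrightarrow>
       (\<integral>\<^sup>+ z\<in>D_region r. ennreal (K1 r z) * U z \<partial>lborel)
         \<le> ennreal c * (SUP w. \<integral>\<^sup>+ z\<in>cball 0 2. U (z + w) \<partial>lborel))"
  using nn_integral_K1_le unfolding local_mass_def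
  by (intro exI[of _ "6 / (1 - exp (-1/4))"]) auto

end
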